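(* Let $X_1$ be a real random variable with cumulative distribution function $F$ and mean $\mu$, let $p\geq1$ and suppose $\nu_p:=(\mathbb{E}|X_1-\mu|^p)^{1/p}<+\infty$. For $\xi>0$ define \[\rho_{F,p}(\xi):=\sup\left\{\frac{(\mathbb{E}[|X_1-\mu|^pZ])^{1/p}}{\nu_p}:\ Z \text{ a random variable with }0\leq Z\leq1,\ \mathbb{E}Z\leq\xi\right\}\] when $\nu_p>0$, and $\rho_{F,p}(\xi)=0$ otherwise (the supremum is over random variables $Z$ defined jointly with $X_1$). Then $0\leq\rho_{F,p}\leq1$, $\lim_{\xi\to0}\rho_{F,p}(\xi)=0$, and \[\forall r>0:\quad \Pr(|X_1-\mu|>r\nu_p)\leq\frac{\rho_{F,p}(r^{-p})^p}{r^p}.\] Finally, if $\nu_q\leq\kappa_{p,q}\nu_p<+\infty$ for some $q>p$ (with $\nu_q:=(\mathbb{E}|X_1-\mu|^q)^{1/q}$), then $\rho_{F,p}(\xi)\leq\kappa_{p,q}\,\xi^{\frac1p-\frac1q}$. *)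

theory Defs
  imports "HOL-Probability.Probability"
begin

definition nu_law :: "real measure \<Rightarrow> real \<Rightarrow> real \<Rightarrow> real" where
  "nu_law F mu p = (\<integral>x. \<bar>x - mu\<bar> powr p \<partial>F) powr (1 / p)"

text \<open>Couplings of X with a random variable Z: joint laws J of (X, Z) on the plane,
  whose first marginal is the law F of X.\<close>
definition admissible_coupling :: "real measure \<Rightarrow> real \<Rightarrow> (real \<times> real) measure \<Rightarrow> bool" where
  "admissible_coupling F xi J \<longleftrightarrow>
     prob_space J \<and> sets J = sets (borel \<Otimes>\<^sub>M borel) \<and> distr J borel fst = F \<and>
     (AE w in J. 0 \<le> snd w \<and> snd w \<le> 1) \<and> (\<integral>w. snd w \<partial>J) \<le> xi"

definition rho_Fp :: "real measure \<Rightarrow> real \<Rightarrow> real \<Rightarrow> real \<Rightarrow> real" where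
  "rho_Fp F mu p xi =
     (if nu_law F mu p > 0 then
        Sup {(\<integral>w. \<bar>fst w - mu\<bar> powr p * snd w \<partial>J) powr (1 / p) / nu_law F mu p
             | J. admissible_coupling F xi J}
      else 0)"

end

theory Submission
  imports Defs
begin

text \<open>
  For a weight Z with 0 \<le> Z \<le> 1 and E Z \<le> xi, write E[|X - mu|^p Z] for its weighted
  moment; (rho nu)^p is the supremum of these. Splitting at a level K, a weighted moment is at
  most E[|X - mu|^p; |X - mu|^p > K] + K xi, and the first term vanishes as K grows by dominated
  convergence, so rho(xi) tends to 0. The weight Z = 1{|X - mu| > r nu} has E Z \<le> r^-p by
  Markov's inequality, and its weighted moment is at least (r nu)^p P(|X - mu| > r nu), which
  gives the tail bound. Finally Young's inequality with a balancing weight gives Hoelder's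
  inequality with exponents q/p and q/(q-p); since Z^(q/(q-p)) \<le> Z, every weighted moment is
  at most nu_q^p xi^(1 - p/q).
\<close>

lemma Youngs_inequality_unit_weight:
  fixes a z s t :: real
  assumes s: "s > 1" and t: "t > 0" and a: "a \<ge> 0" and z: "0 \<le> z" "z \<le> 1"
  shows "a * z \<le> t powr s / s * a powr s + t powr (- (s / (s - 1))) / (s / (s - 1)) * z"
proof -
  define s' where "s' = s / (s - 1)"
  have s': "s' > 1" and conj: "1 / s + 1 / s' = 1"
    using s by (auto simp: s'_def field_simps)
  have "a * z = (t * a) * (z / t)"
    using t by simp
  also have "\<dots> \<le> (t * a) powr s / s + (z / t) powr s' / s'"
    by (rule Youngs_inequality[OF s s' conj]) (use t a z in auto)
  also have "\<dots> \<le> (t * a) powr s / s + (z / t powr s') / s'"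
  proof -
    have "z powr s' \<le> z"
      using z s' powr_mono'[of 1 s' z] by simp
    then have "(z / t) powr s' \<le> z / t powr s'"
      using t z by (simp add: powr_divide divide_right_mono)
    then show ?thesis
      by (intro add_left_mono divide_right_mono) (use s' in auto)
  qed
  also have "\<dots> = t powr s / s * a powr s + t powr (- s') / s' * z"
    using t a by (simp add: powr_mult powr_minus divide_inverse)
  finally show ?thesis
    by (simp add: s'_def)
qed

lemma Youngs_inequality_balancing_weight:
  fixes s A Z :: real
  assumes s: "s > 1" and A: "A > 0" and Z: "Z > 0"
  obtains t where "t > 0"
    and "t powr s / s * A + t powr (- (s / (s - 1))) / (s / (s - 1)) * Z
           = A powr (1 / s) * Z powr (1 - 1 / s)"
proof -
  define s' where "s' = s / (s - 1)"
  define u where "u = A powr (1 / s) * Z powr (1 - 1 / s)"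
  define t where "t = (Z / A) powr (1 / (s * s'))"
  have s': "s' > 1" "1 / s + 1 / s' = 1"
    using s by (auto simp: s'_def field_simps)
  have exp_s: "1 / (s * s') * s = 1 - 1 / s" and exp_s': "1 / (s * s') * (- s') = - (1 / s)"
    using s s' by (simp_all add: s'_def divide_simps)
  have "t powr s * A = Z powr (1 - 1 / s) * (A powr 1 / A powr (1 - 1 / s))"
    unfolding t_def powr_powr exp_s using A Z by (simp add: powr_divide)
  also have "A powr 1 / A powr (1 - 1 / s) = A powr (1 / s)"
    using powr_diff[of A 1 "1 - 1 / s"] by simp
  finally have tA: "t powr s * A = u"
    by (simp add: u_def)
  have "t powr (- s') * Z = A powr (1 / s) * (Z powr 1 / Z powr (1 / s))"
    unfolding t_def powr_powr exp_s' using A Z by (simp add: powr_divide powr_minus field_simps)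
  also have "Z powr 1 / Z powr (1 / s) = Z powr (1 - 1 / s)"
    using powr_diff[of Z 1 "1 / s"] by simp
  finally have tZ: "t powr (- s') * Z = u"
    by (simp add: u_def)
  have "t powr s / s * A + t powr (- s') / s' * Z = u * (1 / s + 1 / s')"
    using tA tZ by (simp add: field_simps)
  then show ?thesis
    using that[of t] A Z s' by (simp add: t_def u_def s'_def)
qed

lemma Holder_inequality_unit_weight:
  fixes a z :: "'a \<Rightarrow> real" and s A Z :: real
  assumes s: "s > 1" and A: "A > 0" and Z: "Z > 0"
    and int_az: "integrable M (\<lambda>x. a x * z x)"
    and int_a: "integrable M (\<lambda>x. a x powr s)" and int_z: "integrable M z"
    and a_nonneg: "AE x in M. 0 \<le> a x" and z_unit: "AE x in M. 0 \<le> z x \<and> z x \<le> 1"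
    and le_A: "(\<integral>x. a x powr s \<partial>M) \<le> A" and le_Z: "(\<integral>x. z x \<partial>M) \<le> Z"
  shows "(\<integral>x. a x * z x \<partial>M) \<le> A powr (1 / s) * Z powr (1 - 1 / s)"
proof -
  define s' where "s' = s / (s - 1)"
  have s': "s' > 1"
    using s by (simp add: s'_def field_simps)
  obtain t where t: "t > 0"
    and balanced: "t powr s / s * A + t powr (- s') / s' * Z = A powr (1 / s) * Z powr (1 - 1 / s)"
    using Youngs_inequality_balancing_weight[OF s A Z] unfolding s'_def by blast
  have "AE x in M. a x * z x \<le> t powr s / s * a x powr s + t powr (- s') / s' * z x"
    using a_nonneg z_unit
    unfolding s'_def by eventually_elim (rule Youngs_inequality_unit_weight[OF s t]; simp)
  then have "(\<integral>x. a x * z x \<partial>M) \<le> (\<integral>x. t powr s / s * a x powr s + t powr (- s') / s' * z x \<partial>M)"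
    by (intro integral_mono_AE int_az) (auto simp: int_a int_z)
  also have "\<dots> = t powr s / s * (\<integral>x. a x powr s \<partial>M) + t powr (- s') / s' * (\<integral>x. z x \<partial>M)"
    using int_a int_z by simp
  also have "\<dots> \<le> t powr s / s * A + t powr (- s') / s' * Z"
    using le_A le_Z s s' by (intro add_mono mult_left_mono) auto
  finally show ?thesis
    unfolding balanced .
qed

lemma tendsto_integral_tail_at_top:
  fixes g :: "'a \<Rightarrow> real"
  assumes g: "integrable M g"
  shows "((\<lambda>t. \<integral>x. (if g x > t then g x else 0) \<partial>M) \<longlongrightarrow> 0) at_top"
proof -
  have [measurable]: "g \<in> borel_measurable M"
    using g by simp
  have "((\<lambda>t. \<integral>x. (if g x > t then g x else 0) \<partial>M) \<longlongrightarrow> (\<integral>x. 0 \<partial>M)) at_top"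
  proof (rule integral_dominated_convergence_at_top[where w = "\<lambda>x. norm (g x)"])
    show "AE x in M. ((\<lambda>t. if g x > t then g x else 0) \<longlongrightarrow> 0) at_top"
    proof (intro AE_I2 tendsto_eventually)
      fix x
      show "eventually (\<lambda>t. (if g x > t then g x else 0) = 0) at_top"
        using eventually_ge_at_top[of "g x"] by eventually_elim auto
    qed
  qed (use g in auto)
  then show ?thesis
    by simp
qed

lemma tendsto_zero_at_right_if_tail_bound:
  fixes f T :: "real \<Rightarrow> real"
  assumes T: "(T \<longlongrightarrow> 0) at_top"
    and nonneg: "\<And>xi. xi > 0 \<Longrightarrow> 0 \<le> f xi"
    and bound: "\<And>K xi. K \<ge> 0 \<Longrightarrow> xi > 0 \<Longrightarrow> f xi \<le> T K + K * xi"
  shows "(f \<longlongrightarrow> 0) (at_right 0)"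
proof (rule tendstoI)
  fix e :: real
  assume e: "e > 0"
  obtain K where K: "K \<ge> 1" "T K < e / 2"
    using eventually_conj[OF eventually_ge_at_top[of 1] order_tendstoD(2)[OF T, of "e / 2"]] e
    by (auto dest: eventually_happens)
  have "f xi < e" if "0 < xi" "xi < e / (2 * K)" for xi
  proof -
    have "K * xi < e / 2"
      using that K by (simp add: field_simps)
    then show ?thesis
      using bound[of K xi] K that by simp
  qed
  then show "eventually (\<lambda>xi. dist (f xi) 0 < e) (at_right 0)"
    unfolding eventually_at_right_field using e K nonneg
    by (intro exI[of _ "e / (2 * K)"]) auto
qed

lemma admissible_coupling_measurable:
  assumes "admissible_coupling F xi J"
  shows "fst \<in> borel_measurable J" "snd \<in> borel_measurable J"
  using assms measurable_cong_sets[OF _ refl, of J "borel \<Otimes>\<^sub>M borel"]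
  unfolding admissible_coupling_def by auto

lemma admissible_coupling_integral_fst:
  fixes f :: "real \<Rightarrow> real"
  assumes J: "admissible_coupling F xi J"
    and f: "f \<in> borel_measurable borel" "integrable F f"
  shows "integrable J (\<lambda>w. f (fst w))" "(\<integral>w. f (fst w) \<partial>J) = (\<integral>x. f x \<partial>F)"
proof -
  have "distr J borel fst = F"
    using J by (simp add: admissible_coupling_def)
  then show "integrable J (\<lambda>w. f (fst w))" "(\<integral>w. f (fst w) \<partial>J) = (\<integral>x. f x \<partial>F)"
    using integrable_distr_eq[OF admissible_coupling_measurable(1)[OF J] f(1)]
      integral_distr[OF admissible_coupling_measurable(1)[OF J] f(1)] f(2)
    by auto
qed

lemma admissible_coupling_integrable_snd:
  assumes J: "admissible_coupling F xi J"
  shows "integrable J snd"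
proof -
  interpret prob_space J
    using J by (simp add: admissible_coupling_def)
  have "AE w in J. norm (snd w) \<le> 1"
    using J unfolding admissible_coupling_def by (auto elim: eventually_mono)
  then show ?thesis
    using admissible_coupling_measurable(2)[OF J]
    by (intro integrable_const_bound[where B = 1]) auto
qed

lemma admissible_coupling_distr:
  fixes M :: "'a measure" and X Z :: "'a \<Rightarrow> real"
  assumes M: "prob_space M" and [measurable]: "X \<in> borel_measurable M" "Z \<in> borel_measurable M"
    and Z_unit: "\<And>\<omega>. \<omega> \<in> space M \<Longrightarrow> 0 \<le> Z \<omega> \<and> Z \<omega> \<le> 1"
    and Z_mean: "(\<integral>\<omega>. Z \<omega> \<partial>M) \<le> xi"
  shows "admissible_coupling (distr M borel X) xi (distr M (borel \<Otimes>\<^sub>M borel) (\<lambda>\<omega>. (X \<omega>, Z \<omega>)))"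
proof -
  have XZ[measurable]: "(\<lambda>\<omega>. (X \<omega>, Z \<omega>)) \<in> measurable M (borel \<Otimes>\<^sub>M borel)"
    by measurable
  show ?thesis
    unfolding admissible_coupling_def
    using prob_space.prob_space_distr[OF M XZ] Z_unit Z_mean
    by (auto simp: distr_distr comp_def AE_distr_iff integral_distr intro!: AE_I2)
qed

lemma integral_centered_moment_pos:
  assumes nu: "nu_law F mu p > 0" and int_q: "integrable F (\<lambda>x. \<bar>x - mu\<bar> powr q)"
  shows "(\<integral>x. \<bar>x - mu\<bar> powr q \<partial>F) > 0"
proof (rule ccontr)
  assume "\<not> (\<integral>x. \<bar>x - mu\<bar> powr q \<partial>F) > 0"
  then have "AE x in F. \<bar>x - mu\<bar> powr q = 0"
    using integral_nonneg_eq_0_iff_AE[OF int_q] by (simp add: integral_nonneg_AE order.antisym)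
  then have "AE x in F. \<bar>x - mu\<bar> powr p = 0"
    by eventually_elim simp
  then have "nu_law F mu p = 0"
    by (simp add: nu_law_def integral_eq_zero_AE)
  with nu show False
    by simp
qed

context
  fixes F :: "real measure" and mu p :: real
  assumes prob_F: "prob_space F" and sets_F: "sets F = sets borel" and p_pos: "p > 0"
    and integrable_moment: "integrable F (\<lambda>x. \<bar>x - mu\<bar> powr p)"
begin

lemma nu_law_powr: "nu_law F mu p powr p = (\<integral>x. \<bar>x - mu\<bar> powr p \<partial>F)"
  using p_pos by (simp add: nu_law_def powr_powr integral_nonneg_AE)

lemma admissible_coupling_exists: "xi \<ge> 0 \<Longrightarrow> \<exists>J. admissible_coupling F xi J"
  using admissible_coupling_distr[OF prob_F, of "\<lambda>x. x" "\<lambda>_. 0" xi]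
    measurable_ident_sets[OF sets_F] distr_id2[OF sets_F[symmetric]]
  by auto

lemma admissible_coupling_weighted_moment:
  assumes J: "admissible_coupling F xi J"
  shows "integrable J (\<lambda>w. \<bar>fst w - mu\<bar> powr p * snd w)"
    and "0 \<le> (\<integral>w. \<bar>fst w - mu\<bar> powr p * snd w \<partial>J)"
    and "(\<integral>w. \<bar>fst w - mu\<bar> powr p * snd w \<partial>J) \<le> nu_law F mu p powr p"
proof -
  note [measurable] = admissible_coupling_measurable[OF J]
  have unit: "AE w in J. 0 \<le> snd w \<and> snd w \<le> 1"
    using J by (simp add: admissible_coupling_def)
  note moment = admissible_coupling_integral_fst[OF J _ integrable_moment]
  have dominated: "AE w in J. 0 \<le> \<bar>fst w - mu\<bar> powr p * snd w
                              \<and> \<bar>fst w - mu\<bar> powr p * snd w \<le> \<bar>fst w - mu\<bar> powr p"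
    using unit by eventually_elim (simp add: mult_left_le)
  then have "AE w in J. norm (\<bar>fst w - mu\<bar> powr p * snd w) \<le> norm (\<bar>fst w - mu\<bar> powr p)"
    by eventually_elim simp
  then show int: "integrable J (\<lambda>w. \<bar>fst w - mu\<bar> powr p * snd w)"
    by (intro Bochner_Integration.integrable_bound[OF moment(1)]) measurable
  show "0 \<le> (\<integral>w. \<bar>fst w - mu\<bar> powr p * snd w \<partial>J)"
    using dominated by (intro integral_nonneg_AE) (auto elim: eventually_mono)
  have "(\<integral>w. \<bar>fst w - mu\<bar> powr p * snd w \<partial>J) \<le> (\<integral>w. \<bar>fst w - mu\<bar> powr p \<partial>J)"
    using dominated by (intro integral_mono_AE int moment(1)) (auto elim: eventually_mono)
  then show "(\<integral>w. \<bar>fst w - mu\<bar> powr p * snd w \<partial>J) \<le> nu_law F mu p powr p"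
    using moment(2) by (simp add: nu_law_powr)
qed

text \<open>
  The product rho_Fp F mu p xi * nu_law F mu p is the supremum of the p-th roots of the weighted
  moments; bounds on this product need no case split on nu_law F mu p > 0, since both sides
  vanish when nu_law F mu p = 0.
\<close>

lemma weighted_moment_le_rho_Fp:
  assumes J: "admissible_coupling F xi J"
  shows "(\<integral>w. \<bar>fst w - mu\<bar> powr p * snd w \<partial>J) powr (1 / p) \<le> rho_Fp F mu p xi * nu_law F mu p"
proof (cases "nu_law F mu p > 0")
  case True
  have le_one: "(\<integral>w. \<bar>fst w - mu\<bar> powr p * snd w \<partial>J') powr (1 / p) / nu_law F mu p \<le> 1"
    if J': "admissible_coupling F xi J'" for J'
  proof -
    note bounds = admissible_coupling_weighted_moment[OF J']
    have "(\<integral>w. \<bar>fst w - mu\<bar> powr p * snd w \<partial>J') powr (1 / p) \<le> (nu_law F mu p powr p) powr (1 / p)"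
      using bounds p_pos by (intro powr_mono2) auto
    then show ?thesis
      using True p_pos by (simp add: powr_powr)
  qed
  have "(\<integral>w. \<bar>fst w - mu\<bar> powr p * snd w \<partial>J) powr (1 / p) / nu_law F mu p \<le> rho_Fp F mu p xi"
    unfolding rho_Fp_def using True J le_one by (auto intro!: cSup_upper bdd_aboveI[of _ 1])
  then show ?thesis
    using True by (simp add: pos_divide_le_eq)
next
  case False
  then have "nu_law F mu p = 0"
    by (simp add: nu_law_def)
  then show ?thesis
    using admissible_coupling_weighted_moment(2,3)[OF J] p_pos by simp
qed

lemma rho_Fp_mult_nu_law_le:
  assumes xi: "xi \<ge> 0"
    and bound: "\<And>J. admissible_coupling F xi J \<Longrightarrow> (\<integral>w. \<bar>fst w - mu\<bar> powr p * snd w \<partial>J) \<le> C"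
  shows "rho_Fp F mu p xi * nu_law F mu p \<le> C powr (1 / p)"
proof (cases "nu_law F mu p > 0")
  case True
  have "(\<integral>w. \<bar>fst w - mu\<bar> powr p * snd w \<partial>J) powr (1 / p) / nu_law F mu p \<le> C powr (1 / p) / nu_law F mu p"
    if J: "admissible_coupling F xi J" for J
    using admissible_coupling_weighted_moment(2)[OF J] bound[OF J] True p_pos
    by (intro divide_right_mono powr_mono2) auto
  then have "rho_Fp F mu p xi \<le> C powr (1 / p) / nu_law F mu p"
    unfolding rho_Fp_def using True admissible_coupling_exists[OF xi] by (auto intro!: cSup_least)
  then show ?thesis
    using True by (simp add: pos_le_divide_eq)
qed (simp add: rho_Fp_def)

lemma rho_Fp_nonneg:
  assumes xi: "xi \<ge> 0"
  shows "0 \<le> rho_Fp F mu p xi"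
proof (cases "nu_law F mu p > 0")
  case True
  obtain J where "admissible_coupling F xi J"
    using admissible_coupling_exists[OF xi] by blast
  then have "0 \<le> rho_Fp F mu p xi * nu_law F mu p"
    using weighted_moment_le_rho_Fp order_trans powr_ge_zero by blast
  then show ?thesis
    using True by (simp add: zero_le_mult_iff)
qed (simp add: rho_Fp_def)

lemma rho_Fp_le_one:
  assumes xi: "xi \<ge> 0"
  shows "rho_Fp F mu p xi \<le> 1"
proof (cases "nu_law F mu p > 0")
  case True
  have "rho_Fp F mu p xi * nu_law F mu p \<le> (nu_law F mu p powr p) powr (1 / p)"
    using admissible_coupling_weighted_moment(3) by (rule rho_Fp_mult_nu_law_le[OF xi])
  also have "\<dots> = nu_law F mu p"
    using True p_pos by (simp add: powr_powr)
  finally show ?thesis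
    using True by simp
qed (simp add: rho_Fp_def)

lemma weighted_moment_le_tail:
  assumes J: "admissible_coupling F xi J" and K: "K \<ge> 0"
  shows "(\<integral>w. \<bar>fst w - mu\<bar> powr p * snd w \<partial>J)
           \<le> (\<integral>x. (if \<bar>x - mu\<bar> powr p > K then \<bar>x - mu\<bar> powr p else 0) \<partial>F) + K * xi"
proof -
  define tail where "tail x = (if \<bar>x - mu\<bar> powr p > K then \<bar>x - mu\<bar> powr p else 0)" for x
  have [measurable]: "tail \<in> borel_measurable borel"
    unfolding tail_def by measurable
  have "tail \<in> borel_measurable F"
    unfolding measurable_cong_sets[OF sets_F refl] by measurable
  then have "integrable F tail"
    by (rule Bochner_Integration.integrable_bound[OF integrable_moment]) (auto simp: tail_def)
  note tail_J = admissible_coupling_integral_fst[OF J _ this]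
  note snd_J = admissible_coupling_integrable_snd[OF J]
  have "AE w in J. 0 \<le> snd w \<and> snd w \<le> 1"
    using J by (simp add: admissible_coupling_def)
  then have "AE w in J. \<bar>fst w - mu\<bar> powr p * snd w \<le> tail (fst w) + K * snd w"
  proof eventually_elim
    case (elim w)
    show ?case
    proof (cases "\<bar>fst w - mu\<bar> powr p > K")
      case True
      then show ?thesis
        using elim K by (simp add: tail_def mult_left_le add_increasing2)
    next
      case False
      then show ?thesis
        using elim by (simp add: tail_def mult_right_mono)
    qed
  qed
  then have "(\<integral>w. \<bar>fst w - mu\<bar> powr p * snd w \<partial>J) \<le> (\<integral>w. tail (fst w) + K * snd w \<partial>J)"
    using admissible_coupling_weighted_moment(1)[OF J] tail_J(1) snd_J
    by (intro integral_mono_AE) auto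
  also have "\<dots> = (\<integral>x. tail x \<partial>F) + K * (\<integral>w. snd w \<partial>J)"
    using tail_J snd_J by simp
  also have "\<dots> \<le> (\<integral>x. tail x \<partial>F) + K * xi"
    using J K by (intro add_left_mono mult_left_mono) (auto simp: admissible_coupling_def)
  finally show ?thesis
    unfolding tail_def .
qed

lemma rho_Fp_tendsto_zero: "(rho_Fp F mu p \<longlongrightarrow> 0) (at_right 0)"
proof (cases "nu_law F mu p > 0")
  case True
  define f where "f xi = (rho_Fp F mu p xi * nu_law F mu p) powr p" for xi
  have f_lim: "(f \<longlongrightarrow> 0) (at_right 0)"
  proof (rule tendsto_zero_at_right_if_tail_bound[OF tendsto_integral_tail_at_top[OF integrable_moment]])
    fix K xi :: real
    assume K: "K \<ge> 0" and xi: "xi > 0"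
    define T where "T = (\<integral>x. (if \<bar>x - mu\<bar> powr p > K then \<bar>x - mu\<bar> powr p else 0) \<partial>F)"
    have "T \<ge> 0"
      unfolding T_def by (intro integral_nonneg_AE) auto
    have "rho_Fp F mu p xi * nu_law F mu p \<le> (T + K * xi) powr (1 / p)"
      using weighted_moment_le_tail[OF _ K] xi unfolding T_def by (intro rho_Fp_mult_nu_law_le) auto
    then have "f xi \<le> ((T + K * xi) powr (1 / p)) powr p"
      unfolding f_def using rho_Fp_nonneg[of xi] xi True p_pos by (intro powr_mono2) auto
    also have "\<dots> = T + K * xi"
      using \<open>T \<ge> 0\<close> K xi p_pos by (simp add: powr_powr)
    finally show "f xi \<le> T + K * xi" .
  qed (simp add: f_def)
  have "((\<lambda>xi. f xi powr (1 / p) / nu_law F mu p) \<longlongrightarrow> 0 powr (1 / p) / nu_law F mu p) (at_right 0)"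
    using p_pos True by (intro tendsto_divide tendsto_powr' tendsto_const f_lim) (auto simp: f_def)
  moreover have "eventually (\<lambda>xi. f xi powr (1 / p) / nu_law F mu p = rho_Fp F mu p xi) (at_right 0)"
    using eventually_at_right_less[of 0]
    by eventually_elim (use True p_pos rho_Fp_nonneg in \<open>simp add: f_def powr_powr\<close>)
  ultimately show ?thesis
    by (simp add: Lim_transform_eventually)
qed (simp add: rho_Fp_def[abs_def])

lemma weighted_moment_le_higher_moment:
  assumes J: "admissible_coupling F xi J" and qp: "q > p" and xi: "xi > 0"
    and int_q: "integrable F (\<lambda>x. \<bar>x - mu\<bar> powr q)"
    and Q: "(\<integral>x. \<bar>x - mu\<bar> powr q \<partial>F) > 0"
  shows "(\<integral>w. \<bar>fst w - mu\<bar> powr p * snd w \<partial>J)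
           \<le> (\<integral>x. \<bar>x - mu\<bar> powr q \<partial>F) powr (p / q) * xi powr (1 - p / q)"
proof -
  have "(\<integral>w. \<bar>fst w - mu\<bar> powr p * snd w \<partial>J)
          \<le> (\<integral>x. \<bar>x - mu\<bar> powr q \<partial>F) powr (1 / (q / p)) * xi powr (1 - 1 / (q / p))"
  proof (rule Holder_inequality_unit_weight)
    have q_moment: "(\<lambda>w. (\<bar>fst w - mu\<bar> powr p) powr (q / p)) = (\<lambda>w. \<bar>fst w - mu\<bar> powr q)"
      using p_pos by (simp add: powr_powr)
    note moment_J = admissible_coupling_integral_fst[OF J _ int_q]
    show "integrable J (\<lambda>w. (\<bar>fst w - mu\<bar> powr p) powr (q / p))"
      "(\<integral>w. (\<bar>fst w - mu\<bar> powr p) powr (q / p) \<partial>J) \<le> (\<integral>x. \<bar>x - mu\<bar> powr q \<partial>F)"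
      using moment_J unfolding q_moment by auto
    show "AE w in J. 0 \<le> snd w \<and> snd w \<le> 1" "(\<integral>w. snd w \<partial>J) \<le> xi"
      using J by (simp_all add: admissible_coupling_def)
  qed (use qp p_pos Q xi admissible_coupling_weighted_moment(1)[OF J]
         admissible_coupling_integrable_snd[OF J] in auto)
  then show ?thesis
    by simp
qed

lemma rho_Fp_le_powr:
  assumes qp: "q > p" and kappa: "kappa \<ge> 0"
    and int_q: "integrable F (\<lambda>x. \<bar>x - mu\<bar> powr q)"
    and nu_q: "nu_law F mu q \<le> kappa * nu_law F mu p" and xi: "xi > 0"
  shows "rho_Fp F mu p xi \<le> kappa * xi powr (1 / p - 1 / q)"
proof (cases "nu_law F mu p > 0")
  case True
  define Q where "Q = (\<integral>x. \<bar>x - mu\<bar> powr q \<partial>F)"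
  have Q: "Q > 0"
    unfolding Q_def using True int_q by (rule integral_centered_moment_pos)
  have "rho_Fp F mu p xi * nu_law F mu p \<le> (Q powr (p / q) * xi powr (1 - p / q)) powr (1 / p)"
    using weighted_moment_le_higher_moment[OF _ qp xi int_q] Q xi unfolding Q_def
    by (intro rho_Fp_mult_nu_law_le) auto
  also have "\<dots> = nu_law F mu q * xi powr (1 / p - 1 / q)"
    using Q xi p_pos qp by (simp add: nu_law_def Q_def powr_mult powr_powr field_simps)
  also have "\<dots> \<le> kappa * nu_law F mu p * xi powr (1 / p - 1 / q)"
    using nu_q by (simp add: mult_right_mono)
  finally show ?thesis
    using True by (simp add: mult.commute[of _ "nu_law F mu p"] mult.assoc)
qed (use kappa in \<open>simp add: rho_Fp_def\<close>)

end


lemma nu_law_distr: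
  fixes X :: "'a \<Rightarrow> real"
  assumes [measurable]: "X \<in> borel_measurable M"
  shows "nu_law (distr M borel X) mu p = (\<integral>\<omega>. \<bar>X \<omega> - mu\<bar> powr p \<partial>M) powr (1 / p)"
  by (simp add: nu_law_def integral_distr)

lemma integrable_distr_centered_moment:
  fixes X :: "'a \<Rightarrow> real"
  assumes [measurable]: "X \<in> borel_measurable M"
  shows "integrable (distr M borel X) (\<lambda>x. \<bar>x - mu\<bar> powr p) \<longleftrightarrow> integrable M (\<lambda>\<omega>. \<bar>X \<omega> - mu\<bar> powr p)"
  by (simp add: integrable_distr_eq)

lemma law_distr_borel:
  fixes X :: "'a \<Rightarrow> real"
  assumes "prob_space M" and [measurable]: "X \<in> borel_measurable M"
    and "integrable M (\<lambda>\<omega>. \<bar>X \<omega> - mu\<bar> powr p)"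
  shows "prob_space (distr M borel X)" "sets (distr M borel X) = sets borel"
    "integrable (distr M borel X) (\<lambda>x. \<bar>x - mu\<bar> powr p)"
  using prob_space.prob_space_distr[of M X borel] assms
  by (simp_all add: integrable_distr_centered_moment)

lemma Markov_inequality_centered_moment:
  fixes M :: "'a measure" and X :: "'a \<Rightarrow> real"
  assumes M: "prob_space M" and [measurable]: "X \<in> borel_measurable M"
    and p: "p > 0" and c: "c \<ge> 0" and moment: "integrable M (\<lambda>\<omega>. \<bar>X \<omega> - mu\<bar> powr p)"
  defines "A \<equiv> {\<omega> \<in> space M. \<bar>X \<omega> - mu\<bar> > c}"
  shows "c powr p * measure M A \<le> (\<integral>\<omega>. \<bar>X \<omega> - mu\<bar> powr p * indicator A \<omega> \<partial>M)"
proof -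
  interpret prob_space M by (rule M)
  have A[measurable]: "A \<in> sets M"
    unfolding A_def by measurable
  have "c powr p * prob A = (\<integral>\<omega>. c powr p * indicator A \<omega> \<partial>M)"
    by simp
  also have "\<dots> \<le> (\<integral>\<omega>. \<bar>X \<omega> - mu\<bar> powr p * indicator A \<omega> \<partial>M)"
    using p c A integrable_real_mult_indicator[OF A moment]
    by (intro integral_mono integrable_mult_right integrable_real_indicator)
      (auto simp: indicator_def A_def less_top[symmetric] intro!: powr_mono2)
  finally show ?thesis .
qed

lemma weighted_moment_le_rho_Fp_distr:
  fixes M :: "'a measure" and X Z :: "'a \<Rightarrow> real"
  assumes M: "prob_space M" and X[measurable]: "X \<in> borel_measurable M"
    and Z[measurable]: "Z \<in> borel_measurable M"
    and Z_unit: "\<And>\<omega>. \<omega> \<in> space M \<Longrightarrow> 0 \<le> Z \<omega> \<and> Z \<omega> \<le> 1" and Z_mean: "(\<integral>\<omega>. Z \<omega> \<partial>M) \<le> xi"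
    and p: "p > 0" and moment: "integrable M (\<lambda>\<omega>. \<bar>X \<omega> - mu\<bar> powr p)"
  shows "(\<integral>\<omega>. \<bar>X \<omega> - mu\<bar> powr p * Z \<omega> \<partial>M)
           \<le> (rho_Fp (distr M borel X) mu p xi * nu_law (distr M borel X) mu p) powr p"
proof -
  let ?F = "distr M borel X"
  define J where "J = distr M (borel \<Otimes>\<^sub>M borel) (\<lambda>\<omega>. (X \<omega>, Z \<omega>))"
  note F = law_distr_borel[OF M X moment]
  have J: "admissible_coupling ?F xi J"
    unfolding J_def using M X Z Z_unit Z_mean by (rule admissible_coupling_distr)
  have "(\<lambda>\<omega>. (X \<omega>, Z \<omega>)) \<in> M \<rightarrow>\<^sub>M borel \<Otimes>\<^sub>M borel"
    by measurable
  then have "(\<integral>\<omega>. \<bar>X \<omega> - mu\<bar> powr p * Z \<omega> \<partial>M) = (\<integral>w. \<bar>fst w - mu\<bar> powr p * snd w \<partial>J)"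
    unfolding J_def by (subst integral_distr) auto
  also have "\<dots> = ((\<integral>w. \<bar>fst w - mu\<bar> powr p * snd w \<partial>J) powr (1 / p)) powr p"
    using admissible_coupling_weighted_moment(2)[OF F(1,2) p F(3) J] p by (simp add: powr_powr)
  also have "\<dots> \<le> (rho_Fp ?F mu p xi * nu_law ?F mu p) powr p"
    using weighted_moment_le_rho_Fp[OF F(1,2) p F(3) J] p by (intro powr_mono2) auto
  finally show ?thesis .
qed

lemma measure_deviation_le_rho_Fp:
  fixes M :: "'a measure" and X :: "'a \<Rightarrow> real"
  assumes M: "prob_space M" and X[measurable]: "X \<in> borel_measurable M"
    and p: "p > 0" and r: "r > 0"
    and moment: "integrable M (\<lambda>\<omega>. \<bar>X \<omega> - mu\<bar> powr p)"
  shows "measure M {\<omega> \<in> space M. \<bar>X \<omega> - mu\<bar> > r * nu_law (distr M borel X) mu p}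
           \<le> rho_Fp (distr M borel X) mu p (r powr (- p)) powr p / r powr p"
proof -
  interpret prob_space M by (rule M)
  define nu where "nu = nu_law (distr M borel X) mu p"
  define rho where "rho = rho_Fp (distr M borel X) mu p (r powr (- p))"
  define A where "A = {\<omega> \<in> space M. \<bar>X \<omega> - mu\<bar> > r * nu}"
  note F = law_distr_borel[OF M X moment]
  have A_sets[measurable]: "A \<in> sets M"
    unfolding A_def by measurable
  have nu_nonneg: "nu \<ge> 0"
    by (simp add: nu_def nu_law_def)
  have nu_powr: "nu powr p = (\<integral>\<omega>. \<bar>X \<omega> - mu\<bar> powr p \<partial>M)"
    using p by (simp add: nu_def nu_law_distr[OF X] powr_powr integral_nonneg)
  have int_A: "integrable M (\<lambda>\<omega>. \<bar>X \<omega> - mu\<bar> powr p * indicator A \<omega>)"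
    using A_sets moment by (rule integrable_real_mult_indicator)
  have Markov: "(r * nu) powr p * prob A \<le> (\<integral>\<omega>. \<bar>X \<omega> - mu\<bar> powr p * indicator A \<omega> \<partial>M)"
    unfolding A_def using r nu_nonneg by (intro Markov_inequality_centered_moment M X p moment) simp
  have "prob A \<le> rho powr p / r powr p"
  proof (cases "nu > 0")
    case False
    then have "AE \<omega> in M. \<bar>X \<omega> - mu\<bar> powr p = 0"
      using integral_nonneg_eq_0_iff_AE[OF moment] nu_powr p nu_nonneg by simp
    then have "prob A = 0"
      unfolding A_def using False nu_nonneg by (intro prob_eq_0_AE) (auto elim: eventually_mono)
    then show ?thesis
      by simp
  next
    case True
    have "(r * nu) powr p * prob A \<le> nu powr p"
      using Markov integral_mono[OF int_A moment] nu_powr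
      by (auto simp: indicator_def intro: order_trans)
    then have "prob A \<le> r powr (- p)"
      using r True by (simp add: powr_mult powr_minus field_simps)
    then have "(\<integral>\<omega>. \<bar>X \<omega> - mu\<bar> powr p * indicator A \<omega> \<partial>M) \<le> (rho * nu) powr p"
      unfolding rho_def nu_def
      by (intro weighted_moment_le_rho_Fp_distr[OF M X _ _ _ p moment]) auto
    with Markov have "(r powr p * prob A) * nu powr p \<le> rho powr p * nu powr p"
      using r nu_nonneg rho_Fp_nonneg[OF F(1,2) p F(3), of "r powr (- p)"]
      by (simp add: rho_def powr_mult mult_ac)
    then have "r powr p * prob A \<le> rho powr p"
      using True by simp
    then show ?thesis
      using r by (simp add: pos_le_divide_eq mult.commute)
  qed
  then show ?thesis
    unfolding A_def nu_def rho_def .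
qed

theorem proposition2p1:
  fixes M :: "'a measure" and X :: "'a \<Rightarrow> real" and p :: real
  assumes "prob_space M"
    and "X \<in> borel_measurable M"
    and "integrable M X"
    and "p \<ge> 1"
    and "integrable M (\<lambda>\<omega>. \<bar>X \<omega> - (\<integral>\<omega>. X \<omega> \<partial>M)\<bar> powr p)"
  shows "(\<forall>xi>0. 0 \<le> rho_Fp (distr M borel X) (\<integral>\<omega>. X \<omega> \<partial>M) p xi
                  \<and> rho_Fp (distr M borel X) (\<integral>\<omega>. X \<omega> \<partial>M) p xi \<le> 1)
       \<and> (rho_Fp (distr M borel X) (\<integral>\<omega>. X \<omega> \<partial>M) p \<longlongrightarrow> 0) (at_right 0)
       \<and> (\<forall>r>0. measure M {\<omega> \<in> space M. \<bar>X \<omega> - (\<integral>\<omega>. X \<omega> \<partial>M)\<bar>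
                  > r * (\<integral>\<omega>. \<bar>X \<omega> - (\<integral>\<omega>. X \<omega> \<partial>M)\<bar> powr p \<partial>M) powr (1 / p)}
              \<le> rho_Fp (distr M borel X) (\<integral>\<omega>. X \<omega> \<partial>M) p (r powr (- p)) powr p / r powr p)
       \<and> (\<forall>q kappa. q > p \<and> kappa \<ge> 0
            \<and> integrable M (\<lambda>\<omega>. \<bar>X \<omega> - (\<integral>\<omega>. X \<omega> \<partial>M)\<bar> powr q)
            \<and> (\<integral>\<omega>. \<bar>X \<omega> - (\<integral>\<omega>. X \<omega> \<partial>M)\<bar> powr q \<partial>M) powr (1 / q)
                \<le> kappa * (\<integral>\<omega>. \<bar>X \<omega> - (\<integral>\<omega>. X \<omega> \<partial>M)\<bar> powr p \<partial>M) powr (1 / p)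
            \<longrightarrow> (\<forall>xi>0. rho_Fp (distr M borel X) (\<integral>\<omega>. X \<omega> \<partial>M) p xi
                          \<le> kappa * xi powr (1 / p - 1 / q)))"
proof -
  let ?F = "distr M borel X" and ?mu = "\<integral>\<omega>. X \<omega> \<partial>M"
  have p: "p > 0"
    using assms(4) by simp
  note F = law_distr_borel[OF assms(1,2,5)]
  note nu = nu_law_distr[OF assms(2), symmetric]
  have rho_le_powr: "rho_Fp ?F ?mu p xi \<le> kappa * xi powr (1 / p - 1 / q)"
    if "q > p" "kappa \<ge> 0" "integrable M (\<lambda>\<omega>. \<bar>X \<omega> - ?mu\<bar> powr q)"
      "(\<integral>\<omega>. \<bar>X \<omega> - ?mu\<bar> powr q \<partial>M) powr (1 / q) \<le> kappa * (\<integral>\<omega>. \<bar>X \<omega> - ?mu\<bar> powr p \<partial>M) powr (1 / p)"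
      "xi > 0" for q kappa xi
    using rho_Fp_le_powr[OF F(1,2) p F(3)] that assms(2)
    by (simp add: nu integrable_distr_centered_moment)
  show ?thesis
    using rho_Fp_nonneg[OF F(1,2) p F(3)] rho_Fp_le_one[OF F(1,2) p F(3)]
      rho_Fp_tendsto_zero[OF F(1,2) p F(3)] measure_deviation_le_rho_Fp[OF assms(1,2) p _ assms(5)]
      rho_le_powr
    by (simp add: nu less_imp_le)
qed
end
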